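(* Let $B$ be a finite set of Boolean functions and $\langle W,D\rangle$ a $B$-default theory. If $[B]\subseteq \mathrm{R}_1$, then $\langle W,D\rangle$ has a unique stable extension. If $[B]\subseteq\mathrm{M}$, then $\langle W,D\rangle$ has at most one stable extension.
   Context: A clone is a set of Boolean functions containing all projections and closed under composition; $[B]$ is the smallest clone containing $B$. $\mathrm{R}_1$ is the clone of $1$-reproducing functions ($f(1,\dots,1)=1$); $\mathrm{M}$ is the clone of monotone functions. For a finite set $B$ of Boolean functions (possibly including constants $0,1$), a $B$-formula uses only connectives from $B$. A $B$-default theory $\langle W,D\rangle$ consists of a finite set $W$ of $B$-formulae and a finite set $D$ of rules $\frac{\alpha:\beta}{\gamma}$ with $B$-formulae $\alpha,\beta,\gamma$. With $\mathrm{Th}(A)=\{\varphi\mid A\models\varphi\}$, for a set $E$ of formulae $\Gamma(E)$ is the smallest set with $W\subseteq\Gamma(E)$, $\Gamma(E)=\mathrm{Th}(\Gamma(E))$, and $\gamma\in\Gamma(E)$ whenever $\frac{\alpha:\beta}{\gamma}\in D$, $\alpha\in\Gamma(E)$, $\neg\beta\notin E$. A stable extension is a fixed point $E=\Gamma(E)$. *)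

theory Defs
  imports Main
begin

text \<open>A Boolean function is represented by its arity n together with a map on
  bool lists; only its values on lists of length n are meaningful.
  Constants 0 and 1 are the functions of arity 0.\<close>
type_synonym bfun = "nat \<times> (bool list \<Rightarrow> bool)"

datatype 'v formula = Var 'v | App bfun "'v formula list"

fun wf_formula :: "'v formula \<Rightarrow> bool" where
  "wf_formula (Var v) = True"
| "wf_formula (App f args) = (length args = fst f \<and> (\<forall>a\<in>set args. wf_formula a))"

fun is_B_formula :: "bfun set \<Rightarrow> 'v formula \<Rightarrow> bool" where
  "is_B_formula B (Var v) = True"
| "is_B_formula B (App f args) =
     (f \<in> B \<and> length args = fst f \<and> (\<forall>a\<in>set args. is_B_formula B a))"

fun eval :: "('v \<Rightarrow> bool) \<Rightarrow> 'v formula \<Rightarrow> bool" where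
  "eval \<sigma> (Var v) = \<sigma> v"
| "eval \<sigma> (App f args) = snd f (map (eval \<sigma>) args)"

definition neg_fun :: bfun where
  "neg_fun = (1, \<lambda>xs. \<not> hd xs)"

definition Neg :: "'v formula \<Rightarrow> 'v formula" where
  "Neg \<phi> = App neg_fun [\<phi>]"

definition entails :: "'v formula set \<Rightarrow> 'v formula \<Rightarrow> bool" where
  "entails A \<phi> = (\<forall>\<sigma>. (\<forall>\<psi>\<in>A. eval \<sigma> \<psi>) \<longrightarrow> eval \<sigma> \<phi>)"

definition Th :: "'v formula set \<Rightarrow> 'v formula set" where
  "Th A = {\<phi>. wf_formula \<phi> \<and> entails A \<phi>}"

definition proj :: "nat \<Rightarrow> nat \<Rightarrow> bfun" where
  "proj n i = (n, \<lambda>xs. xs ! i)"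

definition compose :: "bfun \<Rightarrow> nat \<Rightarrow> bfun list \<Rightarrow> bfun" where
  "compose f n gs = (n, \<lambda>xs. snd f (map (\<lambda>g. snd g xs) gs))"

definition is_clone :: "bfun set \<Rightarrow> bool" where
  "is_clone C =
     ((\<forall>n i. i < n \<longrightarrow> proj n i \<in> C) \<and>
      (\<forall>f gs n. f \<in> C \<longrightarrow> length gs = fst f \<longrightarrow> (\<forall>g\<in>set gs. g \<in> C \<and> fst g = n)
          \<longrightarrow> compose f n gs \<in> C))"

definition clone_gen :: "bfun set \<Rightarrow> bfun set" where
  "clone_gen B = \<Inter>{C. is_clone C \<and> B \<subseteq> C}"

definition R1 :: "bfun set" where
  "R1 = {f. snd f (replicate (fst f) True) = True}"

definition Mon :: "bfun set" where
  "Mon = {f. \<forall>xs ys. length xs = fst f \<longrightarrow> length ys = fst f \<longrightarrow> list_all2 (\<le>) xs ys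
                 \<longrightarrow> snd f xs \<le> snd f ys}"

text \<open>Default logic. A default rule (alpha, beta, gamma) stands for alpha:beta / gamma.\<close>
definition Gamma :: "'v formula set \<Rightarrow> ('v formula \<times> 'v formula \<times> 'v formula) set
                      \<Rightarrow> 'v formula set \<Rightarrow> 'v formula set" where
  "Gamma W D E = \<Inter>{S. W \<subseteq> S \<and> Th S = S \<and>
      (\<forall>(\<alpha>,\<beta>,\<gamma>)\<in>D. \<alpha> \<in> S \<and> Neg \<beta> \<notin> E \<longrightarrow> \<gamma> \<in> S)}"

definition stable_extension :: "'v formula set \<Rightarrow> ('v formula \<times> 'v formula \<times> 'v formula) set
                      \<Rightarrow> 'v formula set \<Rightarrow> bool" where
  "stable_extension W D E = (E = Gamma W D E)"

end

theory Submission
  imports Defs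
begin

text \<open>
  Let \<open>T\<^sub>1\<close> be the theory of the all-true assignment and \<open>F\<close> the set of
  all (well-formed) formulas. The operator \<open>\<Gamma>(E)\<close> depends on \<open>E\<close> only through the set
  of justifications it blocks, and it is antitone in \<open>E\<close>.

  If \<open>B \<subseteq> R\<^sub>1\<close>, every \<open>B\<close>-formula holds under the all-true assignment, so every
  \<open>\<Gamma>(E)\<close> lies inside the deductively closed set \<open>T\<^sub>1\<close>, which contains no negated
  \<open>B\<close>-formula. Hence no justification is ever blocked by an extension candidate
  \<open>E \<subseteq> T\<^sub>1\<close>, so \<open>\<Gamma>(E) = \<Gamma>(\<emptyset>)\<close> for all of them and \<open>\<Gamma>(\<emptyset>)\<close> is the unique extension.

  If \<open>B \<subseteq> M\<close>, every \<open>\<Gamma>(E)\<close> is generated by its \<open>B\<close>-formulas; if they are satisfiable,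
  monotonicity makes them true under the all-true assignment, so \<open>\<Gamma>(E) \<subseteq> T\<^sub>1\<close>,
  and otherwise \<open>\<Gamma>(E) = F\<close>. Inside \<open>T\<^sub>1\<close> the blocked justifications are exactly those
  \<open>\<beta>\<close> false under the all-true assignment, so two such extensions coincide; and an
  extension equal to \<open>F\<close> blocks everything, hence is contained in every other one.

  Both parts only use the connectives of \<open>B\<close> themselves, so the hypotheses on the
  generated clone \<open>[B]\<close> enter the final theorem through \<open>B \<subseteq> [B]\<close>.
\<close>

lemma B_formula_wf: "is_B_formula B \<phi> \<Longrightarrow> wf_formula \<phi>"
  by (induction \<phi>) auto

lemma R1_formula_true:
  assumes "B \<subseteq> R1" and "is_B_formula B \<phi>"
  shows "eval (\<lambda>_. True) \<phi>"
  using assms(2)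
proof (induction \<phi>)
  case (App f args)
  have "map (eval (\<lambda>_. True)) args = map (\<lambda>_. True) args"
    using App by (intro map_cong) auto
  also have "\<dots> = replicate (fst f) True"
    using App.prems by (simp add: map_replicate_const)
  finally show ?case using App.prems assms(1) by (auto simp: R1_def)
qed simp

lemma Mon_formula_true:
  assumes "B \<subseteq> Mon" and "is_B_formula B \<phi>" and "eval \<sigma> \<phi>"
  shows "eval (\<lambda>_. True) \<phi>"
  using assms(2,3)
proof (induction \<phi>)
  case (App f args)
  have f: "f \<in> Mon" and len: "length args = fst f" using App.prems assms(1) by auto
  have "list_all2 (\<le>) (map (eval \<sigma>) args) (map (eval (\<lambda>_. True)) args)"
    using App by (auto simp: list_all2_conv_all_nth le_bool_def)
  then have "snd f (map (eval \<sigma>) args) \<le> snd f (map (eval (\<lambda>_. True)) args)"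
    using f len unfolding Mon_def mem_Collect_eq by (metis length_map)
  then show ?case using App.prems by (auto simp: le_bool_def)
qed simp

definition all_formulas :: "'v formula set" where
  "all_formulas = {\<phi>. wf_formula \<phi>}"

definition top_theory :: "'v formula set" where
  "top_theory = {\<phi>. wf_formula \<phi> \<and> eval (\<lambda>_. True) \<phi>}"

lemma Neg_notin_top_theory: "eval (\<lambda>_. True) \<beta> \<Longrightarrow> Neg \<beta> \<notin> top_theory"
  by (simp add: top_theory_def Neg_def neg_fun_def)

lemma Th_mono: "A \<subseteq> A' \<Longrightarrow> Th A \<subseteq> Th A'"
  unfolding Th_def entails_def by blast

lemma Th_subset_all: "Th A \<subseteq> all_formulas"
  unfolding Th_def all_formulas_def by blast

lemma Th_inflationary: "A \<subseteq> all_formulas \<Longrightarrow> A \<subseteq> Th A"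
  unfolding Th_def entails_def all_formulas_def by auto

lemma Th_idem: "Th (Th A) = Th A"
  using Th_inflationary[OF Th_subset_all] unfolding Th_def entails_def by auto

lemma Th_unsat: "\<not> (\<exists>\<sigma>. \<forall>\<psi>\<in>A. eval \<sigma> \<psi>) \<Longrightarrow> Th A = all_formulas"
  unfolding Th_def entails_def all_formulas_def by auto

text \<open>The only model of \<open>top_theory\<close> is the all-true assignment, so it is deductively closed.\<close>
lemma Th_top_theory: "Th top_theory = top_theory"
proof
  have "\<sigma> = (\<lambda>_. True)" if "\<forall>\<psi>\<in>top_theory. eval \<sigma> \<psi>" for \<sigma> :: "'v \<Rightarrow> bool"
  proof
    fix v :: 'v
    have "Var v \<in> top_theory" by (simp add: top_theory_def)
    then show "\<sigma> v = True" using that by fastforce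
  qed
  then show "top_theory \<subseteq> (Th top_theory :: 'v formula set)"
    unfolding Th_def entails_def by (auto simp: top_theory_def)
qed (auto simp: Th_def entails_def top_theory_def)

lemma Gamma_least:
  assumes "W \<subseteq> S" "Th S = S" "\<forall>(\<alpha>,\<beta>,\<gamma>)\<in>D. \<alpha> \<in> S \<and> Neg \<beta> \<notin> E \<longrightarrow> \<gamma> \<in> S"
  shows "Gamma W D E \<subseteq> S"
  using assms unfolding Gamma_def by blast

lemma Gamma_contains_W: "W \<subseteq> Gamma W D E"
  unfolding Gamma_def by blast

lemma Gamma_closed: "Th (Gamma W D E) \<subseteq> Gamma W D E"
proof -
  have "Th (Gamma W D E) \<subseteq> S" if "W \<subseteq> S" "Th S = S"
      "\<forall>(\<alpha>,\<beta>,\<gamma>)\<in>D. \<alpha> \<in> S \<and> Neg \<beta> \<notin> E \<longrightarrow> \<gamma> \<in> S" for S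
    using Th_mono[OF Gamma_least[OF that]] that(2) by simp
  then show ?thesis unfolding Gamma_def by blast
qed

lemma Gamma_rule:
  assumes "(\<alpha>,\<beta>,\<gamma>) \<in> D" "\<alpha> \<in> Gamma W D E" "Neg \<beta> \<notin> E"
  shows "\<gamma> \<in> Gamma W D E"
proof -
  have "\<gamma> \<in> S" if "W \<subseteq> S" "Th S = S"
      and S: "\<forall>(\<alpha>,\<beta>,\<gamma>)\<in>D. \<alpha> \<in> S \<and> Neg \<beta> \<notin> E \<longrightarrow> \<gamma> \<in> S" for S
  proof -
    have "\<alpha> \<in> S" using assms(2) Gamma_least[OF that] by blast
    then show ?thesis using S assms(1,3) by fast
  qed
  then show ?thesis unfolding Gamma_def by blast
qed

lemma Gamma_antimono:
  assumes "\<forall>(\<alpha>,\<beta>,\<gamma>)\<in>D. Neg \<beta> \<notin> E' \<longrightarrow> Neg \<beta> \<notin> E"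
  shows "Gamma W D E' \<subseteq> Gamma W D E"
proof -
  have "Gamma W D E' \<subseteq> S" if "W \<subseteq> S" "Th S = S"
      and S: "\<forall>(\<alpha>,\<beta>,\<gamma>)\<in>D. \<alpha> \<in> S \<and> Neg \<beta> \<notin> E \<longrightarrow> \<gamma> \<in> S" for S
    using that(1,2)
  proof (rule Gamma_least)
    show "\<forall>(\<alpha>,\<beta>,\<gamma>)\<in>D. \<alpha> \<in> S \<and> Neg \<beta> \<notin> E' \<longrightarrow> \<gamma> \<in> S"
      using S assms by fast
  qed
  then show ?thesis unfolding Gamma_def by blast
qed

lemma Gamma_cong:
  assumes "\<forall>(\<alpha>,\<beta>,\<gamma>)\<in>D. Neg \<beta> \<in> E' \<longleftrightarrow> Neg \<beta> \<in> E"
  shows "Gamma W D E' = Gamma W D E"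
  using assms by (intro equalityI Gamma_antimono) auto

lemma Gamma_generated_by_B_formulas:
  fixes E :: "'v formula set"
  assumes W: "\<forall>\<phi>\<in>W. is_B_formula B \<phi>"
    and D: "\<forall>(\<alpha>,\<beta>,\<gamma>)\<in>D. is_B_formula B \<gamma>"
  defines "X \<equiv> {\<phi> \<in> Gamma W D E. is_B_formula B \<phi>}"
  shows "Gamma W D E = Th X"
proof
  have X_incl: "X \<subseteq> Th X"
    using B_formula_wf by (intro Th_inflationary) (auto simp: X_def all_formulas_def)
  show Th_X: "Th X \<subseteq> Gamma W D E"
    using Th_mono[of X "Gamma W D E"] Gamma_closed[of W D E] unfolding X_def by blast
  show "Gamma W D E \<subseteq> Th X"
  proof (rule Gamma_least)
    show "W \<subseteq> Th X"
      using W Gamma_contains_W[of W D E] X_incl unfolding X_def by blast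
    show "Th (Th X) = Th X" by (rule Th_idem)
    show "\<forall>(\<alpha>,\<beta>,\<gamma>)\<in>D. \<alpha> \<in> Th X \<and> Neg \<beta> \<notin> E \<longrightarrow> \<gamma> \<in> Th X"
    proof clarify
      fix \<alpha> \<beta> \<gamma> assume r: "(\<alpha>,\<beta>,\<gamma>) \<in> D" and "\<alpha> \<in> Th X" "Neg \<beta> \<notin> E"
      then have "\<gamma> \<in> Gamma W D E" using Th_X Gamma_rule by blast
      then have "\<gamma> \<in> X" using r D unfolding X_def by blast
      then show "\<gamma> \<in> Th X" using X_incl by blast
    qed
  qed
qed

section \<open>1-reproducing connectives\<close>

lemma R1_Gamma_top_theory:
  assumes "B \<subseteq> R1"
    and "\<forall>\<phi>\<in>W. is_B_formula B \<phi>"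
    and "\<forall>(\<alpha>,\<beta>,\<gamma>)\<in>D. is_B_formula B \<gamma>"
  shows "Gamma W D E \<subseteq> top_theory"
proof -
  have B_top: "\<phi> \<in> top_theory" if "is_B_formula B \<phi>" for \<phi>
    using that R1_formula_true[OF assms(1)] B_formula_wf unfolding top_theory_def by blast
  show ?thesis
  proof (rule Gamma_least)
    show "W \<subseteq> top_theory" using assms(2) B_top by blast
    show "Th top_theory = top_theory" by (rule Th_top_theory)
    show "\<forall>(\<alpha>,\<beta>,\<gamma>)\<in>D. \<alpha> \<in> top_theory \<and> Neg \<beta> \<notin> E \<longrightarrow> \<gamma> \<in> top_theory"
      using assms(3) B_top by blast
  qed
qed

text \<open>A subset of \<open>top_theory\<close> blocks no justification written over 1-reproducing
  connectives, so it behaves like the empty set.\<close>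
lemma R1_Gamma_below_top_theory:
  assumes "B \<subseteq> R1"
    and "\<forall>(\<alpha>,\<beta>,\<gamma>)\<in>D. is_B_formula B \<beta>"
    and "E \<subseteq> top_theory"
  shows "Gamma W D E = Gamma W D {}"
  using assms R1_formula_true Neg_notin_top_theory by (intro Gamma_cong) blast

theorem R1_unique_extension:
  assumes "B \<subseteq> R1"
    and "\<forall>\<phi>\<in>W. is_B_formula B \<phi>"
    and "\<forall>(\<alpha>,\<beta>,\<gamma>)\<in>D. is_B_formula B \<beta> \<and> is_B_formula B \<gamma>"
  shows "\<exists>!E. stable_extension W D E"
proof -
  have below: "Gamma W D E \<subseteq> top_theory" for E
    using assms by (intro R1_Gamma_top_theory) auto
  have Gamma_const: "E \<subseteq> top_theory \<Longrightarrow> Gamma W D E = Gamma W D {}" for E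
    using assms by (intro R1_Gamma_below_top_theory) auto
  show ?thesis
  proof
    show "stable_extension W D (Gamma W D {})"
      unfolding stable_extension_def using Gamma_const[OF below] by simp
  next
    fix E assume "stable_extension W D E"
    then show "E = Gamma W D {}"
      unfolding stable_extension_def using Gamma_const below by metis
  qed
qed

section \<open>Monotone connectives\<close>

lemma Mon_Gamma_dichotomy:
  assumes "B \<subseteq> Mon"
    and "\<forall>\<phi>\<in>W. is_B_formula B \<phi>"
    and "\<forall>(\<alpha>,\<beta>,\<gamma>)\<in>D. is_B_formula B \<gamma>"
  shows "Gamma W D E \<subseteq> top_theory \<or> Gamma W D E = all_formulas"
proof -
  define X where "X = {\<phi> \<in> Gamma W D E. is_B_formula B \<phi>}"
  have G: "Gamma W D E = Th X"
    unfolding X_def using assms(2,3) by (rule Gamma_generated_by_B_formulas)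
  show ?thesis
  proof (cases "\<exists>\<sigma>. \<forall>\<psi>\<in>X. eval \<sigma> \<psi>")
    case True
    then have "\<forall>\<psi>\<in>X. eval (\<lambda>_. True) \<psi>"
      using Mon_formula_true[OF assms(1)] by (auto simp: X_def)
    then have "Th X \<subseteq> top_theory" unfolding Th_def entails_def top_theory_def by blast
    then show ?thesis using G by blast
  qed (simp add: G Th_unsat)
qed

text \<open>Inside \<open>top_theory\<close>, a closed set blocks a monotone justification \<open>\<beta>\<close> exactly
  when \<open>\<beta>\<close> fails under the all-true assignment (and then fails everywhere).\<close>
lemma Mon_blocked_iff:
  assumes "B \<subseteq> Mon" and "is_B_formula B \<beta>"
    and "Th E \<subseteq> E" and "E \<subseteq> top_theory"
  shows "Neg \<beta> \<in> E \<longleftrightarrow> \<not> eval (\<lambda>_. True) \<beta>"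
proof
  assume "\<not> eval (\<lambda>_. True) \<beta>"
  then have "\<not> eval \<sigma> \<beta>" for \<sigma> using Mon_formula_true assms(1,2) by blast
  then have "Neg \<beta> \<in> Th E"
    using B_formula_wf[OF assms(2)] by (simp add: Th_def entails_def Neg_def neg_fun_def)
  then show "Neg \<beta> \<in> E" using assms(3) by blast
qed (use assms(4) Neg_notin_top_theory in blast)

theorem Mon_at_most_one_extension:
  assumes "B \<subseteq> Mon"
    and "\<forall>\<phi>\<in>W. is_B_formula B \<phi>"
    and D: "\<forall>(\<alpha>,\<beta>,\<gamma>)\<in>D. is_B_formula B \<beta> \<and> is_B_formula B \<gamma>"
    and "stable_extension W D E1" and "stable_extension W D E2"
  shows "E1 = E2"
proof -
  have E1: "E1 = Gamma W D E1" and E2: "E2 = Gamma W D E2"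
    using assms(4,5) by (simp_all add: stable_extension_def)
  have D_concl: "\<forall>(\<alpha>,\<beta>,\<gamma>)\<in>D. is_B_formula B \<gamma>" using D by auto
  have dichotomy: "E \<subseteq> top_theory \<or> E = all_formulas" if "E = Gamma W D E" for E
    using Mon_Gamma_dichotomy[OF assms(1,2) D_concl, of E] that by simp
  have top_all: "top_theory \<subseteq> all_formulas"
    by (auto simp: top_theory_def all_formulas_def)
  text \<open>An inconsistent extension blocks every default, so it lies below any extension.\<close>
  have inconsistent_least: "E' \<subseteq> E"
    if "E = Gamma W D E" "E' = Gamma W D E'" "E' = all_formulas" for E E'
  proof -
    have "\<forall>(\<alpha>,\<beta>,\<gamma>)\<in>D. Neg \<beta> \<in> E'"
    proof clarify
      fix \<alpha> \<beta> \<gamma> assume "(\<alpha>,\<beta>,\<gamma>) \<in> D"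
      then have "is_B_formula B \<beta>" using D by auto
      then have "wf_formula \<beta>" by (rule B_formula_wf)
      then show "Neg \<beta> \<in> E'" using that(3) by (simp add: all_formulas_def Neg_def neg_fun_def)
    qed
    then have "Gamma W D E' \<subseteq> Gamma W D E" by (intro Gamma_antimono) blast
    then show ?thesis using that(1,2) by simp
  qed
  consider "E1 \<subseteq> top_theory" "E2 \<subseteq> top_theory" | "E1 = all_formulas" | "E2 = all_formulas"
    using dichotomy E1 E2 by blast
  then show ?thesis
  proof cases
    case 1
    have "\<forall>(\<alpha>,\<beta>,\<gamma>)\<in>D. Neg \<beta> \<in> E1 \<longleftrightarrow> Neg \<beta> \<in> E2"
    proof clarify
      fix \<alpha> \<beta> \<gamma> assume "(\<alpha>,\<beta>,\<gamma>) \<in> D"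
      then have \<beta>: "is_B_formula B \<beta>" using D by auto
      have "Th E1 \<subseteq> E1" "Th E2 \<subseteq> E2" using Gamma_closed E1 E2 by metis+
      then show "Neg \<beta> \<in> E1 \<longleftrightarrow> Neg \<beta> \<in> E2"
        using Mon_blocked_iff[OF assms(1) \<beta>] 1 by simp
    qed
    then show ?thesis using Gamma_cong[of D E1 E2 W] E1 E2 by simp
  next
    case 2
    have "E2 \<subseteq> all_formulas" using dichotomy[OF E2] top_all by blast
    then show ?thesis using inconsistent_least[OF E2 E1 2] 2 by blast
  next
    case 3
    have "E1 \<subseteq> all_formulas" using dichotomy[OF E1] top_all by blast
    then show ?thesis using inconsistent_least[OF E1 E2 3] 3 by blast
  qed
qed

theorem lemma5p2:
  fixes B :: "bfun set"
    and W :: "'v formula set"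
    and D :: "('v formula \<times> 'v formula \<times> 'v formula) set"
  assumes "finite B"
    and "finite W" and "finite D"
    and "\<forall>\<phi>\<in>W. is_B_formula B \<phi>"
    and "\<forall>(\<alpha>,\<beta>,\<gamma>)\<in>D. is_B_formula B \<alpha> \<and> is_B_formula B \<beta> \<and> is_B_formula B \<gamma>"
  shows "(clone_gen B \<subseteq> R1 \<longrightarrow> (\<exists>!E. stable_extension W D E)) \<and>
         (clone_gen B \<subseteq> Mon \<longrightarrow>
            (\<forall>E1 E2. stable_extension W D E1 \<longrightarrow> stable_extension W D E2 \<longrightarrow> E1 = E2))"
proof (intro conjI impI allI)
  have B_clone: "B \<subseteq> clone_gen B" unfolding clone_gen_def by blast
  have D: "\<forall>(\<alpha>,\<beta>,\<gamma>)\<in>D. is_B_formula B \<beta> \<and> is_B_formula B \<gamma>" using assms(5) by auto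
  show "\<exists>!E. stable_extension W D E" if "clone_gen B \<subseteq> R1"
    using that B_clone by (intro R1_unique_extension[OF _ assms(4) D]) blast
  show "E1 = E2" if "clone_gen B \<subseteq> Mon" "stable_extension W D E1" "stable_extension W D E2"
    for E1 E2
    using that B_clone by (intro Mon_at_most_one_extension[OF _ assms(4) D]) blast+
qed

end
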